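(* Let $(\pi_1,\pi_2)$ be any (not necessarily chainable) architecture of depth $2$, i.e. patterns $\pi_i=(a_i,b_i,c_i,d_i)$ with $a_1c_1d_1=a_2b_2d_2$. Then the rank-one contribution supports $\mathbf{U}_i=\mathbf{S}_{\pi_1}[:,i]\mathbf{S}_{\pi_2}[i,:]$, $1\le i\le a_1c_1d_1$, are pairwise either disjoint (in support) or identical. Consequently, for every complex matrix $\mathbf{A}$ of size $a_1b_1d_1\times a_2c_2d_2$, the TwoFactor procedure with input $(\mathbf{A},\mathbf{S}_{\pi_1},\mathbf{S}_{\pi_2})$ returns an optimal solution of $$\inf_{\mathbf{X}\in\Sigma^{\pi_1},\mathbf{Y}\in\Sigma^{\pi_2}}\|\mathbf{A}-\mathbf{X}\mathbf{Y}\|_F^2.$$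
   Context: A pattern is a tuple $\pi=(a,b,c,d)$ of positive integers; $\mathbf{S}_\pi:=\mathbf{I}_a\otimes\mathbf{1}_{b\times c}\otimes\mathbf{I}_d\in\{0,1\}^{abd\times acd}$. A $\pi$-factor is a complex $abd\times acd$ matrix with support contained in that of $\mathbf{S}_\pi$; $\Sigma^\pi$ is the set of $\pi$-factors. For binary $\mathbf{L}\in\{0,1\}^{m\times r},\mathbf{R}\in\{0,1\}^{r\times n}$, let $\mathbf{U}_i:=\mathbf{L}[:,i]\mathbf{R}[i,:]$, let $\mathcal{P}(\mathbf{L},\mathbf{R})$ be the partition of $\{1,\dots,r\}$ into classes of $i\sim j\iff\mathbf{U}_i=\mathbf{U}_j$, and for a class $P$ let $R_P\times C_P$ be the support of $\mathbf{U}_i$, $i\in P$. TwoFactor$(\mathbf{A},\mathbf{L},\mathbf{R})$: set $\mathbf{X}=\mathbf{0}_{m\times r},\mathbf{Y}=\mathbf{0}_{r\times n}$; for each $P\in\mathcal{P}(\mathbf{L},\mathbf{R})$ set $(\mathbf{X}[R_P,P],\mathbf{Y}[P,C_P])$ to a pair $(\mathbf{H},\mathbf{K})\in\mathbb{C}^{|R_P|\times|P|}\times\mathbb{C}^{|P|\times|C_P|}$ minimizing $\|\mathbf{A}[R_P,C_P]-\mathbf{H}\mathbf{K}\|_F$; return $(\mathbf{X},\mathbf{Y})$. *)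

theory Defs
  imports Complex_Main "Jordan_Normal_Form.Matrix"
begin

definition kron :: "'a::semiring_1 mat \<Rightarrow> 'a mat \<Rightarrow> 'a mat" where
  "kron A B = mat (dim_row A * dim_row B) (dim_col A * dim_col B)
     (\<lambda>(i,j). A $$ (i div dim_row B, j div dim_col B) * B $$ (i mod dim_row B, j mod dim_col B))"

definition ones_mat :: "nat \<Rightarrow> nat \<Rightarrow> 'a::semiring_1 mat" where
  "ones_mat b c = mat b c (\<lambda>_. 1)"

type_synonym pattern = "nat \<times> nat \<times> nat \<times> nat"

definition valid_pattern :: "pattern \<Rightarrow> bool" where
  "valid_pattern \<pi> = (case \<pi> of (a,b,c,d) \<Rightarrow> a > 0 \<and> b > 0 \<and> c > 0 \<and> d > 0)"

definition S_pat :: "pattern \<Rightarrow> complex mat" where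
  "S_pat \<pi> = (case \<pi> of (a,b,c,d) \<Rightarrow> kron (kron (1\<^sub>m a) (ones_mat b c)) (1\<^sub>m d))"

definition factors :: "pattern \<Rightarrow> complex mat set" (\<open>\<Sigma>\<close>) where
  "factors \<pi> = (case \<pi> of (a,b,c,d) \<Rightarrow>
     {X. X \<in> carrier_mat (a*b*d) (a*c*d) \<and>
         (\<forall>i<a*b*d. \<forall>j<a*c*d. X $$ (i,j) \<noteq> 0 \<longrightarrow> S_pat \<pi> $$ (i,j) \<noteq> 0)})"

definition frob_norm :: "complex mat \<Rightarrow> real" where
  "frob_norm M = sqrt (\<Sum>i<dim_row M. \<Sum>j<dim_col M. (cmod (M $$ (i,j)))\<^sup>2)"

definition U_mat :: "complex mat \<Rightarrow> complex mat \<Rightarrow> nat \<Rightarrow> complex mat" where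
  "U_mat L R i = mat (dim_row L) (dim_col R) (\<lambda>(p,q). L $$ (p,i) * R $$ (i,q))"

definition supp :: "complex mat \<Rightarrow> (nat \<times> nat) set" where
  "supp M = {(p,q). p < dim_row M \<and> q < dim_col M \<and> M $$ (p,q) \<noteq> 0}"

definition cls :: "complex mat \<Rightarrow> complex mat \<Rightarrow> nat \<Rightarrow> nat set" where
  "cls L R i = {j. j < dim_col L \<and> U_mat L R j = U_mat L R i}"

definition rows_cls :: "complex mat \<Rightarrow> complex mat \<Rightarrow> nat \<Rightarrow> nat set" where
  "rows_cls L R i = fst ` supp (U_mat L R i)"

definition cols_cls :: "complex mat \<Rightarrow> complex mat \<Rightarrow> nat \<Rightarrow> nat set" where
  "cols_cls L R i = snd ` supp (U_mat L R i)"

definition block_err :: "complex mat \<Rightarrow> nat set \<Rightarrow> nat set \<Rightarrow> nat set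
    \<Rightarrow> (nat \<Rightarrow> nat \<Rightarrow> complex) \<Rightarrow> (nat \<Rightarrow> nat \<Rightarrow> complex) \<Rightarrow> real" where
  "block_err A Rs P Cs H K =
     (\<Sum>p\<in>Rs. \<Sum>q\<in>Cs. (cmod (A $$ (p,q) - (\<Sum>j\<in>P. H p j * K j q)))\<^sup>2)"

(* (X,Y) is a possible output of TwoFactor(A,L,R): X,Y vanish outside the blocks
   X[R_P,P], Y[P,C_P], and on each class P the pair (X[R_P,P], Y[P,C_P]) minimizes
   ||A[R_P,C_P] - H K||_F over all H, K. *)
definition TwoFactor_output :: "complex mat \<Rightarrow> complex mat \<Rightarrow> complex mat
    \<Rightarrow> complex mat \<Rightarrow> complex mat \<Rightarrow> bool" where
  "TwoFactor_output A L R X Y \<longleftrightarrow>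
     (let m = dim_row L; r = dim_col L; n = dim_col R in
      X \<in> carrier_mat m r \<and> Y \<in> carrier_mat r n \<and>
      (\<forall>p<m. \<forall>j<r. p \<notin> rows_cls L R j \<longrightarrow> X $$ (p,j) = 0) \<and>
      (\<forall>j<r. \<forall>q<n. q \<notin> cols_cls L R j \<longrightarrow> Y $$ (j,q) = 0) \<and>
      (\<forall>i<r. \<forall>H K. block_err A (rows_cls L R i) (cls L R i) (cols_cls L R i)
                       (\<lambda>p j. X $$ (p,j)) (\<lambda>j q. Y $$ (j,q))
                   \<le> block_err A (rows_cls L R i) (cls L R i) (cols_cls L R i) H K))"

end

theory Submission
  imports Defs
begin

text \<open>Entry \<open>(p, i)\<close> of \<open>S\<^sub>\<pi>\<close> is \<open>1\<close> exactly when the row and the column carry the same key (block index, offset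
  modulo \<open>d\<close>); hence two columns of \<open>S\<^sub>\<pi>\<close> either coincide or have disjoint supports, and likewise two rows.
  If the supports of \<open>U\<^sub>i\<close> and \<open>U\<^sub>j\<close> meet, column \<open>i\<close> of \<open>L\<close> meets column \<open>j\<close> and row \<open>i\<close> of \<open>R\<close> meets row \<open>j\<close>,
  so \<open>U\<^sub>i = U\<^sub>j\<close>.

  For optimality, take any \<open>X, Y\<close> supported in \<open>L, R\<close>. Outside the union of the supports of the \<open>U\<^sub>i\<close> the
  product \<open>X Y\<close> vanishes, and on the support of \<open>U\<^sub>i\<close> only the indices in the class of \<open>i\<close> contribute.
  Since these supports are pairwise disjoint, \<open>\<parallel>A - X Y\<parallel>\<^sub>F\<^sup>2\<close> is a constant plus a sum of independent
  block errors, each of which TwoFactor minimizes.\<close>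

lemma dim_S_pat [simp]:
  "dim_row (S_pat (a,b,c,d)) = a*b*d" "dim_col (S_pat (a,b,c,d)) = a*c*d"
  by (simp_all add: S_pat_def kron_def ones_mat_def)

lemma S_pat_index:
  assumes "p < a*b*d" "i < a*c*d"
  shows "S_pat (a,b,c,d) $$ (p,i) =
           (if (p div d div b, p mod d) = (i div d div c, i mod d) then 1 else 0)"
proof -
  have pos: "b > 0" "c > 0" "d > 0" using assms by (auto intro!: Nat.gr0I)
  have "p div d < a*b" "i div d < a*c"
    using assms pos by (simp_all add: less_mult_imp_div_less)
  then have "p div d div b < a" "i div d div c < a"
    using pos by (simp_all add: less_mult_imp_div_less mult.commute)
  with assms pos \<open>p div d < a*b\<close> \<open>i div d < a*c\<close> show ?thesis
    by (simp add: S_pat_def kron_def ones_mat_def mult.commute)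
qed

lemma S_pat_overlapping_cols_eq:
  assumes "p < a*b*d" "i < a*c*d" "j < a*c*d"
    and "S_pat (a,b,c,d) $$ (p,i) \<noteq> 0" "S_pat (a,b,c,d) $$ (p,j) \<noteq> 0"
  shows "col (S_pat (a,b,c,d)) i = col (S_pat (a,b,c,d)) j"
  using assms by (auto simp: S_pat_index col_def split: if_splits)

lemma S_pat_overlapping_rows_eq:
  assumes "i < a*b*d" "j < a*b*d" "q < a*c*d"
    and "S_pat (a,b,c,d) $$ (i,q) \<noteq> 0" "S_pat (a,b,c,d) $$ (j,q) \<noteq> 0"
  shows "row (S_pat (a,b,c,d)) i = row (S_pat (a,b,c,d)) j"
  using assms by (auto simp: S_pat_index row_def split: if_splits)

lemma supp_U_mat:
  "supp (U_mat L R i) =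
     {p. p < dim_row L \<and> L $$ (p,i) \<noteq> 0} \<times> {q. q < dim_col R \<and> R $$ (i,q) \<noteq> 0}"
  by (auto simp: supp_def U_mat_def)

lemma rows_cls_times_cols_cls: "rows_cls L R i \<times> cols_cls L R i = supp (U_mat L R i)"
proof -
  have product: "fst ` S \<times> snd ` S = S" if "S = P \<times> Q" for S :: "(nat \<times> nat) set" and P Q
    using that by simp
  show ?thesis unfolding rows_cls_def cols_cls_def by (rule product[OF supp_U_mat])
qed

lemma U_mat_eqI:
  assumes "col L i = col L j" "row R i = row R j"
  shows "U_mat L R i = U_mat L R j"
proof -
  have "L $$ (p,i) = L $$ (p,j)" if "p < dim_row L" for p
    using arg_cong[OF assms(1), of "\<lambda>v. v $ p"] that by (simp add: col_def)
  moreover have "R $$ (i,q) = R $$ (j,q)" if "q < dim_col R" for q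
    using arg_cong[OF assms(2), of "\<lambda>v. v $ q"] that by (simp add: row_def)
  ultimately show ?thesis by (auto simp: U_mat_def)
qed

lemma U_mat_identical_or_disjoint:
  assumes L: "L \<in> carrier_mat m r" and R: "R \<in> carrier_mat r n" and "i < r" "j < r"
    and cols: "\<And>p. p < m \<Longrightarrow> L $$ (p,i) \<noteq> 0 \<Longrightarrow> L $$ (p,j) \<noteq> 0 \<Longrightarrow> col L i = col L j"
    and rows: "\<And>q. q < n \<Longrightarrow> R $$ (i,q) \<noteq> 0 \<Longrightarrow> R $$ (j,q) \<noteq> 0 \<Longrightarrow> row R i = row R j"
  shows "U_mat L R i = U_mat L R j \<or> supp (U_mat L R i) \<inter> supp (U_mat L R j) = {}"
proof (rule disjCI)
  assume "supp (U_mat L R i) \<inter> supp (U_mat L R j) \<noteq> {}"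
  then obtain p q where "p < m" "q < n" "L $$ (p,i) \<noteq> 0" "L $$ (p,j) \<noteq> 0"
    "R $$ (i,q) \<noteq> 0" "R $$ (j,q) \<noteq> 0"
    using L R unfolding supp_U_mat by auto
  then show "U_mat L R i = U_mat L R j"
    using cols rows by (intro U_mat_eqI)
qed

lemma S_pat_U_mat_identical_or_disjoint:
  assumes "a1*c1*d1 = a2*b2*d2" "i < a1*c1*d1" "j < a1*c1*d1"
  shows "U_mat (S_pat (a1,b1,c1,d1)) (S_pat (a2,b2,c2,d2)) i
           = U_mat (S_pat (a1,b1,c1,d1)) (S_pat (a2,b2,c2,d2)) j
         \<or> supp (U_mat (S_pat (a1,b1,c1,d1)) (S_pat (a2,b2,c2,d2)) i)
           \<inter> supp (U_mat (S_pat (a1,b1,c1,d1)) (S_pat (a2,b2,c2,d2)) j) = {}"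
  using assms
  by (intro U_mat_identical_or_disjoint[of _ "a1*b1*d1" "a1*c1*d1" _ "a2*c2*d2"]
        S_pat_overlapping_cols_eq S_pat_overlapping_rows_eq) auto

lemma supp_subset_iff:
  "supp M \<subseteq> supp N \<longleftrightarrow>
     (\<forall>p<dim_row M. \<forall>q<dim_col M. M $$ (p,q) \<noteq> 0 \<longrightarrow>
        p < dim_row N \<and> q < dim_col N \<and> N $$ (p,q) \<noteq> 0)"
  by (auto simp: supp_def)

lemma factors_iff_supp:
  "X \<in> \<Sigma> (a,b,c,d) \<longleftrightarrow> X \<in> carrier_mat (a*b*d) (a*c*d) \<and> supp X \<subseteq> supp (S_pat (a,b,c,d))"
  by (auto simp: factors_def supp_subset_iff)

lemma TwoFactor_output_supp:
  assumes "L \<in> carrier_mat m r" "R \<in> carrier_mat r n" "TwoFactor_output A L R X Y"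
  shows "X \<in> carrier_mat m r" "supp X \<subseteq> supp L" "Y \<in> carrier_mat r n" "supp Y \<subseteq> supp R"
proof -
  have rows: "L $$ (p,j) \<noteq> 0" if "p \<in> rows_cls L R j" for p j
    using that unfolding rows_cls_def supp_U_mat by (auto split: if_splits)
  have cols: "R $$ (j,q) \<noteq> 0" if "q \<in> cols_cls L R j" for q j
    using that unfolding cols_cls_def supp_U_mat by (auto split: if_splits)
  have dims: "dim_row L = m" "dim_col L = r" "dim_col R = n" using assms(1,2) by auto
  note T = assms(3)[unfolded TwoFactor_output_def Let_def dims]
  from T show X: "X \<in> carrier_mat m r" and Y: "Y \<in> carrier_mat r n" by blast+
  from T have X_zero: "\<forall>p<m. \<forall>j<r. p \<notin> rows_cls L R j \<longrightarrow> X $$ (p,j) = 0"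
    and Y_zero: "\<forall>j<r. \<forall>q<n. q \<notin> cols_cls L R j \<longrightarrow> Y $$ (j,q) = 0"
    by blast+
  have "X $$ (p,j) = 0" if "p < m" "j < r" "L $$ (p,j) = 0" for p j
    using X_zero rows that by blast
  then show "supp X \<subseteq> supp L" using X assms(1) unfolding supp_subset_iff by auto
  have "Y $$ (j,q) = 0" if "j < r" "q < n" "R $$ (j,q) = 0" for j q
    using Y_zero cols that by blast
  then show "supp Y \<subseteq> supp R" using Y assms(2) unfolding supp_subset_iff by auto
qed

lemma index_mult_mat_eq_sum:
  assumes "X \<in> carrier_mat m r" "Y \<in> carrier_mat r n" "p < m" "q < n"
  shows "(X * Y) $$ (p,q) = (\<Sum>j<r. X $$ (p,j) * Y $$ (j,q))"
  using assms by (auto simp: scalar_prod_def lessThan_atLeast0 intro!: sum.cong)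

lemma frob_norm_sq:
  "(frob_norm M)\<^sup>2 = (\<Sum>x\<in>{..<dim_row M} \<times> {..<dim_col M}. (cmod (M $$ x))\<^sup>2)"
  by (simp add: frob_norm_def sum_nonneg sum.cartesian_product)

context
  fixes L R X Y :: "complex mat" and m r n :: nat
  assumes L: "L \<in> carrier_mat m r" and R: "R \<in> carrier_mat r n"
    and X: "X \<in> carrier_mat m r" "supp X \<subseteq> supp L"
    and Y: "Y \<in> carrier_mat r n" "supp Y \<subseteq> supp R"
begin

lemma mult_index_summand_in_supp_U_mat:
  assumes "p < m" "j < r" "q < n" "X $$ (p,j) * Y $$ (j,q) \<noteq> 0"
  shows "(p,q) \<in> supp (U_mat L R j)"
  using assms L R X Y unfolding supp_U_mat supp_subset_iff by auto

lemma mult_index_outside_supp_U_mat: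
  assumes "p < m" "q < n" "\<And>j. j < r \<Longrightarrow> (p,q) \<notin> supp (U_mat L R j)"
  shows "(X * Y) $$ (p,q) = 0"
  unfolding index_mult_mat_eq_sum[OF X(1) Y(1) assms(1,2)]
  using assms(3) mult_index_summand_in_supp_U_mat[OF assms(1) _ assms(2)]
  by (intro sum.neutral) blast

lemma mult_index_in_supp_U_mat:
  assumes disj: "\<forall>i<r. \<forall>j<r. U_mat L R i = U_mat L R j \<or> supp (U_mat L R i) \<inter> supp (U_mat L R j) = {}"
    and "i < r" and pq: "(p,q) \<in> supp (U_mat L R i)"
  shows "(X * Y) $$ (p,q) = (\<Sum>j\<in>cls L R i. X $$ (p,j) * Y $$ (j,q))"
proof -
  have "p < m" "q < n" using pq L R by (auto simp: supp_def U_mat_def)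
  then have "(X * Y) $$ (p,q) = (\<Sum>j<r. X $$ (p,j) * Y $$ (j,q))"
    by (rule index_mult_mat_eq_sum[OF X(1) Y(1)])
  also have "\<dots> = (\<Sum>j\<in>cls L R i. X $$ (p,j) * Y $$ (j,q))"
  proof (rule sum.mono_neutral_right)
    show "cls L R i \<subseteq> {..<r}" using L by (auto simp: cls_def)
    show "\<forall>j\<in>{..<r} - cls L R i. X $$ (p,j) * Y $$ (j,q) = 0"
    proof
      fix j assume j: "j \<in> {..<r} - cls L R i"
      then have "supp (U_mat L R j) \<inter> supp (U_mat L R i) = {}"
        using disj \<open>i < r\<close> L by (auto simp: cls_def)
      with j pq \<open>p < m\<close> \<open>q < n\<close> show "X $$ (p,j) * Y $$ (j,q) = 0"
        using mult_index_summand_in_supp_U_mat by blast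
    qed
  qed simp
  finally show ?thesis .
qed

lemma block_err_eq_sum_supp_U_mat:
  assumes "A \<in> carrier_mat m n"
    and "\<forall>i<r. \<forall>j<r. U_mat L R i = U_mat L R j \<or> supp (U_mat L R i) \<inter> supp (U_mat L R j) = {}"
    and "i < r"
  shows "block_err A (rows_cls L R i) (cls L R i) (cols_cls L R i)
           (\<lambda>p j. X $$ (p,j)) (\<lambda>j q. Y $$ (j,q))
         = (\<Sum>x\<in>supp (U_mat L R i). (cmod ((A - X * Y) $$ x))\<^sup>2)"
  unfolding block_err_def sum.cartesian_product rows_cls_times_cols_cls
proof (intro sum.cong)
  fix x assume x: "x \<in> supp (U_mat L R i)"
  obtain p q where pq: "x = (p,q)" by fastforce
  with x have "p < m" "q < n" using L R by (auto simp: supp_def U_mat_def)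
  with assms X Y have "(A - X * Y) $$ (p,q) = A $$ (p,q) - (\<Sum>j\<in>cls L R i. X $$ (p,j) * Y $$ (j,q))"
    using mult_index_in_supp_U_mat[OF assms(2,3) x[unfolded pq]] by (simp del: index_mult_mat(1))
  then show "(case x of (p,q) \<Rightarrow> (cmod (A $$ (p,q) -
          (\<Sum>j\<in>cls L R i. X $$ (p,j) * Y $$ (j,q))))\<^sup>2) = (cmod ((A - X * Y) $$ x))\<^sup>2"
    by (simp add: pq)
qed simp

end

lemma sum_split_disjoint_family:
  assumes "finite I" "\<Union>Bs \<subseteq> I" "\<forall>B\<in>Bs. \<forall>B'\<in>Bs. B \<noteq> B' \<longrightarrow> B \<inter> B' = {}"
  shows "sum h I = sum h (I - \<Union>Bs) + (\<Sum>B\<in>Bs. sum h B)"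
proof -
  have "finite Bs" "\<forall>B\<in>Bs. finite B"
    using assms(1,2) by (auto intro: finite_UnionD finite_subset)
  have "sum h I = sum h (I - \<Union>Bs) + sum h (\<Union>Bs)"
    by (rule sum.subset_diff[OF assms(2,1)])
  also have "sum h (\<Union>Bs) = (\<Sum>B\<in>Bs. sum h B)"
    using \<open>finite Bs\<close> \<open>\<forall>B\<in>Bs. finite B\<close> assms(3) by (simp add: sum.Union_disjoint)
  finally show ?thesis .
qed

lemma TwoFactor_output_optimal:
  assumes L: "L \<in> carrier_mat m r" and R: "R \<in> carrier_mat r n" and A: "A \<in> carrier_mat m n"
    and disj: "\<forall>i<r. \<forall>j<r. U_mat L R i = U_mat L R j \<or> supp (U_mat L R i) \<inter> supp (U_mat L R j) = {}"
    and T: "TwoFactor_output A L R X Y"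
    and X': "X' \<in> carrier_mat m r" "supp X' \<subseteq> supp L"
    and Y': "Y' \<in> carrier_mat r n" "supp Y' \<subseteq> supp R"
  shows "(frob_norm (A - X * Y))\<^sup>2 \<le> (frob_norm (A - X' * Y'))\<^sup>2"
proof -
  have X: "X \<in> carrier_mat m r" "supp X \<subseteq> supp L" and Y: "Y \<in> carrier_mat r n" "supp Y \<subseteq> supp R"
    using TwoFactor_output_supp[OF L R T] by auto
  define I where "I = {..<m} \<times> {..<n}"
  define Bs where "Bs = (\<lambda>i. supp (U_mat L R i)) ` {..<r}"
  define err where "err Z W x = (cmod ((A - Z * W) $$ x))\<^sup>2" for Z W x
  have split: "(frob_norm (A - Z * W))\<^sup>2 = (\<Sum>x\<in>I - \<Union>Bs. (cmod (A $$ x))\<^sup>2) + (\<Sum>B\<in>Bs. sum (err Z W) B)"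
    if Z: "Z \<in> carrier_mat m r" "supp Z \<subseteq> supp L" and W: "W \<in> carrier_mat r n" "supp W \<subseteq> supp R"
    for Z W
  proof -
    have "\<Union>Bs \<subseteq> I" using L R by (auto simp: Bs_def I_def supp_def U_mat_def)
    moreover have "\<forall>B\<in>Bs. \<forall>B'\<in>Bs. B \<noteq> B' \<longrightarrow> B \<inter> B' = {}"
      using disj by (fastforce simp: Bs_def)
    ultimately have "sum (err Z W) I = sum (err Z W) (I - \<Union>Bs) + (\<Sum>B\<in>Bs. sum (err Z W) B)"
      by (intro sum_split_disjoint_family) (auto simp: I_def)
    moreover have "err Z W x = (cmod (A $$ x))\<^sup>2" if "x \<in> I - \<Union>Bs" for x
      using that A Z W mult_index_outside_supp_U_mat[OF L R Z W]
      by (auto simp: err_def I_def Bs_def)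
    ultimately show ?thesis
      using A Z W by (simp add: frob_norm_sq err_def I_def)
  qed
  have "(\<Sum>B\<in>Bs. sum (err X Y) B) \<le> (\<Sum>B\<in>Bs. sum (err X' Y') B)"
  proof (rule sum_mono)
    fix B assume "B \<in> Bs"
    then obtain i where "i < r" and B: "B = supp (U_mat L R i)" by (auto simp: Bs_def)
    with T have "block_err A (rows_cls L R i) (cls L R i) (cols_cls L R i)
                   (\<lambda>p j. X $$ (p,j)) (\<lambda>j q. Y $$ (j,q))
                 \<le> block_err A (rows_cls L R i) (cls L R i) (cols_cls L R i)
                   (\<lambda>p j. X' $$ (p,j)) (\<lambda>j q. Y' $$ (j,q))"
      using L unfolding TwoFactor_output_def Let_def by auto
    then show "sum (err X Y) B \<le> sum (err X' Y') B"
      unfolding B err_def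
      using block_err_eq_sum_supp_U_mat[OF L R X Y A disj \<open>i < r\<close>]
        block_err_eq_sum_supp_U_mat[OF L R X' Y' A disj \<open>i < r\<close>] by simp
  qed
  then show ?thesis using split[OF X Y] split[OF X' Y'] by simp
qed

theorem lemma5p1:
  fixes a1 b1 c1 d1 a2 b2 c2 d2 :: nat
  assumes "valid_pattern (a1,b1,c1,d1)" and "valid_pattern (a2,b2,c2,d2)"
    and "a1*c1*d1 = a2*b2*d2"
  shows "(\<forall>i<a1*c1*d1. \<forall>j<a1*c1*d1.
            U_mat (S_pat (a1,b1,c1,d1)) (S_pat (a2,b2,c2,d2)) i
              = U_mat (S_pat (a1,b1,c1,d1)) (S_pat (a2,b2,c2,d2)) j
          \<or> supp (U_mat (S_pat (a1,b1,c1,d1)) (S_pat (a2,b2,c2,d2)) i)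
              \<inter> supp (U_mat (S_pat (a1,b1,c1,d1)) (S_pat (a2,b2,c2,d2)) j) = {})
     \<and> (\<forall>A X Y. A \<in> carrier_mat (a1*b1*d1) (a2*c2*d2) \<longrightarrow>
          TwoFactor_output A (S_pat (a1,b1,c1,d1)) (S_pat (a2,b2,c2,d2)) X Y \<longrightarrow>
          X \<in> \<Sigma> (a1,b1,c1,d1) \<and> Y \<in> \<Sigma> (a2,b2,c2,d2) \<and>
          (\<forall>X' \<in> \<Sigma> (a1,b1,c1,d1). \<forall>Y' \<in> \<Sigma> (a2,b2,c2,d2).
             (frob_norm (A - X * Y))\<^sup>2 \<le> (frob_norm (A - X' * Y'))\<^sup>2))"
  (is "?disj \<and> ?opt")
proof
  let ?L = "S_pat (a1,b1,c1,d1)" and ?R = "S_pat (a2,b2,c2,d2)"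
  show ?disj using S_pat_U_mat_identical_or_disjoint[OF assms(3)] by blast
  have L: "?L \<in> carrier_mat (a1*b1*d1) (a1*c1*d1)"
    and R: "?R \<in> carrier_mat (a1*c1*d1) (a2*c2*d2)" using assms(3) by auto
  show ?opt
  proof (intro allI impI conjI ballI)
    fix A X Y X' Y'
    assume A: "A \<in> carrier_mat (a1*b1*d1) (a2*c2*d2)" and T: "TwoFactor_output A ?L ?R X Y"
    show "X \<in> \<Sigma> (a1,b1,c1,d1)" "Y \<in> \<Sigma> (a2,b2,c2,d2)"
      using TwoFactor_output_supp[OF L R T] assms(3) by (auto simp: factors_iff_supp)
    assume "X' \<in> \<Sigma> (a1,b1,c1,d1)" "Y' \<in> \<Sigma> (a2,b2,c2,d2)"
    with L R A T \<open>?disj\<close> show "(frob_norm (A - X * Y))\<^sup>2 \<le> (frob_norm (A - X' * Y'))\<^sup>2"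
      using assms(3) by (intro TwoFactor_output_optimal) (auto simp: factors_iff_supp)
  qed
qed

end
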